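(* There is no Borel probability measure $\nu$ on $[0,1]$ that is simultaneously invariant with respect to $T$, ergodic with respect to $T$, and absolutely continuous with respect to Lebesgue measure.
   Context: Every irrational $x\in(0,1)$ has a unique representation ($\bar O^1$-expansion) $$x=\sum_{k=1}^\infty\frac{(-1)^{k-1}}{g_1(g_1+g_2)\cdots(g_1+g_2+\dots+g_k)}=:\bar O^1(g_1,g_2,\dots),\qquad g_k=g_k(x)\in\mathbb{N},$$ and every infinite sequence of positive integers yields an irrational number in $(0,1)$ this way. The shift $T$ is defined (on irrationals of $(0,1)$, a set of full Lebesgue measure) by $T(\bar O^1(g_1,g_2,g_3,\dots))=\bar O^1(g_2,g_3,\dots)$. A measure $\nu$ is $T$-invariant if $\nu(T^{-1}E)=\nu(E)$ for every Borel set $E$; it is $T$-ergodic if every Borel set $A$ with $T^{-1}A=A$ has $\nu(A)=0$ or $\nu(A)=1$. *)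

theory Defs
  imports "HOL-Probability.Probability"
begin

text \<open>The O-bar-1 expansion. Digits are indexed from 0: g 0 = g_1, g 1 = g_2, ...
  The k-th term (k from 0) is (-1)^k / (g_1 (g_1+g_2) ... (g_1+...+g_(k+1))).\<close>
definition Obar1 :: "(nat \<Rightarrow> nat) \<Rightarrow> real" where
  "Obar1 g = (\<Sum>k. (-1) ^ k / (\<Prod>i\<le>k. real (\<Sum>j\<le>i. g j)))"

text \<open>The (unique) digit sequence of x; meaningful for irrational x in (0,1).\<close>
definition Obar1_digits :: "real \<Rightarrow> (nat \<Rightarrow> nat)" where
  "Obar1_digits x = (THE g. (\<forall>k. 0 < g k) \<and> Obar1 g = x)"

text \<open>The shift T, defined on irrationals of (0,1); set to 0 on the remaining
  (Lebesgue-null) points of [0,1].\<close>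
definition Obar1_shift :: "real \<Rightarrow> real" where
  "Obar1_shift x = (if x \<in> {0<..<1} - \<rat> then Obar1 (\<lambda>k. Obar1_digits x (Suc k)) else 0)"

definition T_invariant :: "real measure \<Rightarrow> (real \<Rightarrow> real) \<Rightarrow> bool" where
  "T_invariant \<nu> T \<longleftrightarrow>
     (\<forall>E \<in> sets \<nu>. T -` E \<inter> space \<nu> \<in> sets \<nu> \<and> emeasure \<nu> (T -` E \<inter> space \<nu>) = emeasure \<nu> E)"

definition T_ergodic :: "real measure \<Rightarrow> (real \<Rightarrow> real) \<Rightarrow> bool" where
  "T_ergodic \<nu> T \<longleftrightarrow>
     (\<forall>A \<in> sets \<nu>. T -` A \<inter> space \<nu> = A \<longrightarrow> emeasure \<nu> A = 0 \<or> emeasure \<nu> A = 1)"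

end

theory Submission
  imports Defs
begin

text \<open>No \<open>T\<close>-invariant probability measure on \<open>[0,1]\<close> is absolutely continuous. Fix \<open>a > 0\<close> and \<open>K \<ge> 1/a\<close>. Since \<open>T\<^sup>n x < 1 / g\<^sub>n\<^sub>+\<^sub>1\<close>, every
  \<open>x \<in> T\<^sup>-\<^sup>n [a,1]\<close> has \<open>g\<^sub>n\<^sub>+\<^sub>1 \<le> K\<close>. The inverse branch of \<open>T\<^sup>n\<close> for the digits
  \<open>g\<^sub>1, \<dots>, g\<^sub>n\<close> (digit sum \<open>s \<ge> n\<close>) is affine and maps the tails \<open>(0, 1/(s+1))\<close> onto the
  cylinder, while \<open>g\<^sub>n\<^sub>+\<^sub>1 \<le> K\<close> confines the tail to \<open>[1/(s+K+1), 1/(s+1))\<close>; so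
  \<open>T\<^sup>-\<^sup>n [a,1]\<close> fills at most the fraction \<open>K/(n+1)\<close> of each cylinder and has Lebesgue
  measure at most \<open>K/(n+1)\<close>, whereas invariance keeps its \<open>\<nu>\<close>-measure equal to \<open>\<nu>[a,1]\<close>.
  Along \<open>n = 2\<^sup>k\<close> the Lebesgue measures are summable, so by Borel--Cantelli their limsup is
  Lebesgue-null, hence \<open>\<nu>\<close>-null, while it has \<open>\<nu>\<close>-measure at least \<open>\<nu>[a,1]\<close>. Thus
  \<open>\<nu>[a,1] = 0\<close> for all \<open>a > 0\<close>, and \<open>\<nu>[0,1] = 0\<close>.\<close>

lemma
  fixes \<alpha> \<beta> :: real
  assumes "\<beta> \<noteq> 0" "I \<in> sets borel"
  shows sets_borel_affine_image: "(\<lambda>t. \<alpha> + \<beta> * t) ` I \<in> sets borel"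
    and emeasure_lborel_affine_image: "emeasure lborel ((\<lambda>t. \<alpha> + \<beta> * t) ` I) = \<bar>\<beta>\<bar> * emeasure lborel I"
proof -
  let ?f = "\<lambda>t. \<alpha> + \<beta> * t"
  have image: "?f ` I = (\<lambda>y. (y - \<alpha>) / \<beta>) -` I"
    using assms(1) by (force simp: field_simps)
  have "(\<lambda>y. (y - \<alpha>) / \<beta>) \<in> borel_measurable borel" by measurable
  from measurable_sets[OF this assms(2)] show borel: "?f ` I \<in> sets borel"
    unfolding image by simp
  have "?f -` (?f ` I) = I" using assms(1) by auto
  then show "emeasure lborel (?f ` I) = \<bar>\<beta>\<bar> * emeasure lborel I"
    using borel assms(1)
    by (subst lborel_real_affine[of \<beta> \<alpha>])
      (simp_all add: emeasure_density nn_integral_cmult_indicator emeasure_distr)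
qed

lemma T_invariant_funpow:
  assumes inv: "T_invariant \<nu> T" and maps: "T \<in> space \<nu> \<rightarrow> space \<nu>" and E: "E \<in> sets \<nu>"
  shows "(T ^^ n) -` E \<inter> space \<nu> \<in> sets \<nu> \<and>
    emeasure \<nu> ((T ^^ n) -` E \<inter> space \<nu>) = emeasure \<nu> E"
proof (induction n)
  case 0
  then show ?case using E sets.sets_into_space[OF E] by (simp add: Int_absorb2)
next
  case (Suc n)
  have "(T ^^ Suc n) -` E \<inter> space \<nu> = T -` ((T ^^ n) -` E \<inter> space \<nu>) \<inter> space \<nu>"
    using maps by (auto simp del: funpow.simps simp add: funpow_Suc_right)
  then show ?case using Suc inv[unfolded T_invariant_def, rule_format, of "(T ^^ n) -` E \<inter> space \<nu>"]
    by (simp del: funpow.simps)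
qed

lemma absolutely_continuous_lower_bound_eq_0:
  fixes c :: ennreal
  assumes ac: "absolutely_continuous M N" and sets_eq: "sets N = sets M" and fin: "finite_measure N"
    and A: "\<And>n. A n \<in> sets M" and summable: "(\<Sum>n. emeasure M (A n)) \<noteq> \<infinity>"
    and lower: "\<And>n. c \<le> emeasure N (A n)"
  shows "c = 0"
proof -
  have finite: "emeasure M (A n) \<noteq> \<infinity>" for n
    using summable ennreal_suminf_lessD[of "\<lambda>n. emeasure M (A n)" \<infinity>]
    by (auto simp: top.not_eq_extremum)
  then have "summable (\<lambda>n. measure M (A n))"
    using summable by (intro summable_suminf_not_top) (simp_all add: emeasure_eq_ennreal_measure)
  then have "limsup A \<in> null_sets M"
    using A finite by (intro borel_cantelli_limsup1) (simp_all add: top.not_eq_extremum)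
  then have null: "limsup A \<in> null_sets N"
    using ac by (auto simp: absolutely_continuous_def)
  let ?B = "\<lambda>n. \<Union>m\<in>{n..}. A m"
  have B: "?B n \<in> sets N" for n using A sets_eq by auto
  have "decseq ?B" by (intro decseq_SucI UN_mono) auto
  have "c \<le> emeasure N (?B n)" for n
    using lower[of n] B by (metis atLeast_iff order_refl UN_upper emeasure_mono order_trans)
  then have "c \<le> (INF n. emeasure N (?B n))" by (rule INF_greatest)
  also have "\<dots> = emeasure N (\<Inter>n. ?B n)"
    using B \<open>decseq ?B\<close> fin
    by (intro INF_emeasure_decseq) (auto simp: finite_measure.emeasure_finite)
  also have "(\<Inter>n. ?B n) = limsup A" by (simp add: limsup_INF_SUP)
  finally show "c = 0" using null_setsD1[OF null] by simp
qed

section \<open>The expansion with shifted partial sums\<close>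

text \<open>Every partial digit sum is shifted by \<open>c\<close>, which makes the expansion closed under
  dropping leading digits (\<open>Obar_rec\<close>).\<close>

definition Obar :: "nat \<Rightarrow> (nat \<Rightarrow> nat) \<Rightarrow> real" where
  "Obar c g = (\<Sum>k. (-1) ^ k / (\<Prod>i\<le>k. real (c + (\<Sum>j\<le>i. g j))))"

definition Obar_term :: "nat \<Rightarrow> (nat \<Rightarrow> nat) \<Rightarrow> nat \<Rightarrow> real" where
  "Obar_term c g k = 1 / (\<Prod>i\<le>k. real (c + (\<Sum>j\<le>i. g j)))"

lemma Obar1_eq_Obar: "Obar1 g = Obar 0 g"
  by (simp add: Obar1_def Obar_def)

lemma Obar_eq_suminf_Obar_term: "Obar c g = (\<Sum>k. (-1) ^ k * Obar_term c g k)"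
  by (simp add: Obar_def Obar_term_def)

lemma Suc_le_sum_pos:
  assumes "\<forall>k. 0 < g k" shows "Suc i \<le> (\<Sum>j\<le>i. g j)"
proof (induction i)
  case (Suc i)
  then show ?case using assms[rule_format, of "Suc i"] by simp
qed (use assms in \<open>simp add: Suc_le_eq\<close>)

lemma Obar_denominator_ge:
  assumes g: "\<forall>k. 0 < g k" shows "real (Suc k) \<le> (\<Prod>i\<le>k. real (c + (\<Sum>j\<le>i. g j)))"
proof (induction k)
  case 0
  then show ?case using Suc_le_sum_pos[OF g, of 0] by simp
next
  case (Suc k)
  have last: "real (Suc (Suc k)) \<le> real (c + (\<Sum>j\<le>Suc k. g j))"
    using Suc_le_sum_pos[OF g, of "Suc k"] by linarith
  have "real (Suc (Suc k)) \<le> real (Suc k) * real (Suc (Suc k))" by simp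
  also have "\<dots> \<le> (\<Prod>i\<le>k. real (c + (\<Sum>j\<le>i. g j))) * real (c + (\<Sum>j\<le>Suc k. g j))"
    using Suc.IH last by (intro mult_mono) auto
  finally show ?case by simp
qed

lemma Obar_term_pos: "\<forall>k. 0 < g k \<Longrightarrow> 0 < Obar_term c g k"
  using Obar_denominator_ge[of g k c] by (simp add: Obar_term_def)

lemma Obar_term_le: "\<forall>k. 0 < g k \<Longrightarrow> Obar_term c g k \<le> 1 / real (Suc k)"
  using Obar_denominator_ge[of g k c] unfolding Obar_term_def by (intro divide_left_mono) auto

lemma Obar_term_0: "Obar_term c g 0 = 1 / real (c + g 0)"
  by (simp add: Obar_term_def)

lemma Obar_term_Suc: "Obar_term c g (Suc k) = Obar_term (c + g 0) (\<lambda>k. g (Suc k)) k / real (c + g 0)"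
  unfolding Obar_term_def prod.atMost_Suc_shift sum.atMost_Suc_shift by (simp add: add.assoc)

lemma Obar_term_decreasing:
  assumes g: "\<forall>k. 0 < g k" shows "Obar_term c g (Suc k) \<le> Obar_term c g k"
proof -
  have "1 \<le> real (c + (\<Sum>j\<le>Suc k. g j))"
    using Suc_le_sum_pos[OF g, of "Suc k"] by linarith
  moreover have "Obar_term c g (Suc k) = Obar_term c g k / real (c + (\<Sum>j\<le>Suc k. g j))"
    by (simp add: Obar_term_def)
  ultimately show ?thesis
    using Obar_term_pos[OF g, of c k] divide_left_mono[of 1 _ "Obar_term c g k"] by simp
qed

lemma Obar_term_tendsto_0: "\<forall>k. 0 < g k \<Longrightarrow> Obar_term c g \<longlonglongrightarrow> 0"
  by (rule Lim_null_comparison[OF _ LIMSEQ_inverse_real_of_nat])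
     (use Obar_term_le Obar_term_pos in \<open>auto simp: inverse_eq_divide less_imp_le\<close>)

lemma
  assumes g: "\<forall>k. 0 < g k"
  shows summable_Obar: "summable (\<lambda>k. (-1) ^ k * Obar_term c g k)"
    and Obar_nonneg: "0 \<le> Obar c g"
    and Obar_le: "Obar c g \<le> 1 / real (c + g 0)"
proof -
  note Leibniz = summable_Leibniz'[OF Obar_term_tendsto_0[OF g, of c]
      less_imp_le[OF Obar_term_pos[OF g]] Obar_term_decreasing[OF g]]
  show "summable (\<lambda>k. (-1) ^ k * Obar_term c g k)" by (rule Leibniz(1))
  show "0 \<le> Obar c g" using Leibniz(2)[of 0] by (simp add: Obar_eq_suminf_Obar_term)
  show "Obar c g \<le> 1 / real (c + g 0)"
    using Leibniz(4)[of 0] by (simp add: Obar_eq_suminf_Obar_term Obar_term_0)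
qed

lemma Obar_rec:
  assumes g: "\<forall>k. 0 < g k"
  shows "Obar c g = (1 - Obar (c + g 0) (\<lambda>k. g (Suc k))) / real (c + g 0)"
proof -
  let ?d = "real (c + g 0)" and ?h = "\<lambda>k. g (Suc k)"
  have h: "\<forall>k. 0 < ?h k" using g by simp
  have "Obar c g - 1 / ?d = (\<Sum>k. (-1) ^ Suc k * Obar_term c g (Suc k))"
    using suminf_split_head[OF summable_Obar[OF g, of c]]
    by (simp add: Obar_eq_suminf_Obar_term Obar_term_0)
  also have "\<dots> = (\<Sum>k. (-1) ^ k * Obar_term (c + g 0) ?h k * (- 1 / ?d))"
    unfolding Obar_term_Suc by (intro suminf_cong) (simp add: divide_simps)
  also have "\<dots> = Obar (c + g 0) ?h * (- 1 / ?d)"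
    unfolding Obar_eq_suminf_Obar_term by (rule suminf_mult2[symmetric, OF summable_Obar[OF h]])
  finally show ?thesis by (simp add: diff_divide_distrib)
qed

lemma Obar_ge:
  assumes g: "\<forall>k. 0 < g k" shows "1 / real (c + g 0 + 1) \<le> Obar c g"
proof -
  let ?d = "real (c + g 0)" and ?h = "\<lambda>k. g (Suc k)"
  have d: "0 < ?d" "0 < ?d + 1" using g[rule_format, of 0] by simp_all
  have "Obar (c + g 0) ?h \<le> 1 / real (c + g 0 + g (Suc 0))" using Obar_le[of ?h "c + g 0"] g by simp
  also have "\<dots> \<le> 1 / (?d + 1)" using g[rule_format, of "Suc 0"] d by (intro divide_left_mono) auto
  finally have "1 / (?d + 1) \<le> (1 - Obar (c + g 0) ?h) / ?d"
    using d by (simp add: field_simps)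
  then show ?thesis using Obar_rec[OF g, of c] by (simp add: add.commute)
qed

lemma Obar_pos: "\<forall>k. 0 < g k \<Longrightarrow> 0 < Obar c g"
  by (rule less_le_trans[OF _ Obar_ge]) simp_all

lemma Obar_less:
  assumes g: "\<forall>k. 0 < g k" shows "Obar c g < 1 / real (c + g 0)"
proof -
  have "0 < Obar (c + g 0) (\<lambda>k. g (Suc k))" using g by (intro Obar_pos) simp
  moreover have "0 < real (c + g 0)" using g[rule_format, of 0] by simp
  ultimately show ?thesis using Obar_rec[OF g, of c] by (simp add: divide_strict_right_mono)
qed

lemma Obar_greater:
  assumes g: "\<forall>k. 0 < g k" shows "1 / real (c + g 0 + 1) < Obar c g"
proof -
  let ?d = "real (c + g 0)" and ?h = "\<lambda>k. g (Suc k)"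
  have d: "0 < ?d" "0 < ?d + 1" using g[rule_format, of 0] by simp_all
  have "Obar (c + g 0) ?h < 1 / real (c + g 0 + g (Suc 0))" using Obar_less[of ?h "c + g 0"] g by simp
  also have "\<dots> \<le> 1 / (?d + 1)" using g[rule_format, of "Suc 0"] d by (intro divide_left_mono) auto
  finally have "1 / (?d + 1) < (1 - Obar (c + g 0) ?h) / ?d"
    using d by (simp add: field_simps)
  then show ?thesis using Obar_rec[OF g, of c] by (simp add: add.commute)
qed

lemma Obar_in_0_1:
  assumes g: "\<forall>k. 0 < g k" shows "Obar 0 g \<in> {0<..<1}"
proof -
  from g have "1 / real (g 0) \<le> 1" by (simp add: Suc_le_eq)
  then show ?thesis using Obar_pos[OF g, of 0] Obar_less[OF g, of 0] by simp
qed

lemma Obar_first_digit_eq: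
  assumes g: "\<forall>k. 0 < g k" and h: "\<forall>k. 0 < h k" and eq: "Obar c g = Obar c h"
  shows "g 0 = h 0"
proof -
  have less: "Obar c v < Obar c u" if u: "\<forall>k. 0 < u k" and v: "\<forall>k. 0 < v k" and "u 0 < v 0" for u v
  proof -
    have "Obar c v < 1 / real (c + v 0)" by (rule Obar_less[OF v])
    also have "\<dots> \<le> 1 / real (c + u 0 + 1)" using \<open>u 0 < v 0\<close> v by (intro divide_left_mono) auto
    also have "\<dots> < Obar c u" by (rule Obar_greater[OF u])
    finally show ?thesis .
  qed
  show ?thesis using less[OF g h] less[OF h g] eq by (metis less_irrefl nat_neq_iff)
qed

lemma Obar_inj:
  assumes "\<forall>k. 0 < g k" "\<forall>k. 0 < h k" "Obar c g = Obar c h" shows "g = h"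
proof
  fix n show "g n = h n"
    using assms
  proof (induction n arbitrary: c g h)
    case 0
    then show ?case by (rule Obar_first_digit_eq)
  next
    case (Suc n)
    have head: "g 0 = h 0" using Suc.prems by (rule Obar_first_digit_eq)
    have "real (c + g 0) \<noteq> 0" using Suc.prems(1) by (metis add_gr_0 of_nat_0_less_iff less_irrefl)
    then have "Obar (c + g 0) (\<lambda>k. g (Suc k)) = Obar (c + g 0) (\<lambda>k. h (Suc k))"
      using Suc.prems(3) unfolding Obar_rec[OF Suc.prems(1), of c] Obar_rec[OF Suc.prems(2), of c] head
      by (simp add: divide_cancel_right)
    moreover note head
    ultimately show ?case using Suc.IH[of "\<lambda>k. g (Suc k)" "\<lambda>k. h (Suc k)"] Suc.prems by simp
  qed
qed

section \<open>Inverse branches and the greedy algorithm\<close>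

fun branch_offset :: "nat \<Rightarrow> nat list \<Rightarrow> real" where
  "branch_offset c [] = 0"
| "branch_offset c (m # p) = (1 - branch_offset (c + m) p) / real (c + m)"

fun branch_slope :: "nat \<Rightarrow> nat list \<Rightarrow> real" where
  "branch_slope c [] = 1"
| "branch_slope c (m # p) = - branch_slope (c + m) p / real (c + m)"

definition branch :: "nat \<Rightarrow> nat list \<Rightarrow> real \<Rightarrow> real" where
  "branch c p t = branch_offset c p + branch_slope c p * t"

lemma branch_Nil [simp]: "branch c [] t = t"
  by (simp add: branch_def)

lemma branch_Cons [simp]: "branch c (m # p) t = (1 - branch (c + m) p t) / real (c + m)"
  by (simp add: branch_def diff_divide_distrib add_divide_distrib)

lemma branch_append: "branch c (p @ q) t = branch c p (branch (c + sum_list p) q t)"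
  by (induction p arbitrary: c) (simp_all add: add.assoc)

lemma branch_diff: "branch c p s - branch c p t = branch_slope c p * (s - t)"
  by (simp add: branch_def algebra_simps)

lemma branch_slope_nonzero: "\<forall>m\<in>set p. 0 < m \<Longrightarrow> branch_slope c p \<noteq> 0"
  by (induction p arbitrary: c) auto

lemma abs_branch_slope_le_1: "\<forall>m\<in>set p. 0 < m \<Longrightarrow> \<bar>branch_slope c p\<bar> \<le> 1"
proof (induction p arbitrary: c)
  case (Cons m p)
  then have "\<bar>branch_slope (c + m) p\<bar> \<le> 1" "1 \<le> real (c + m)" by simp_all
  then have "\<bar>branch_slope (c + m) p\<bar> / real (c + m) \<le> 1" by (simp add: divide_le_eq)
  then show ?case by (simp add: abs_divide)
qed simp

lemma Obar_prefix:
  assumes "\<forall>k. 0 < g k"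
  shows "Obar c g = branch c (map g [0..<n]) (Obar (c + (\<Sum>i<n. g i)) (\<lambda>k. g (k + n)))"
  using assms
proof (induction n arbitrary: c g)
  case (Suc n)
  let ?h = "\<lambda>k. g (Suc k)" and ?t = "Obar (c + (\<Sum>i<Suc n. g i)) (\<lambda>k. g (k + Suc n))"
  have "c + (\<Sum>i<Suc n. g i) = c + g 0 + (\<Sum>i<n. ?h i)"
    by (simp only: sum.lessThan_Suc_shift add.assoc)
  then have "branch (c + g 0) (map ?h [0..<n]) ?t = Obar (c + g 0) ?h"
    using Suc.IH[of ?h "c + g 0"] Suc.prems by (simp add: add.assoc)
  then show ?case
    unfolding map_upt_Suc branch_Cons Obar_rec[OF Suc.prems, of c] by simp
qed simp

lemma greedy_step:
  fixes y :: real and c :: nat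
  assumes y: "y \<notin> \<rat>" "0 < y" "y < 1 / (real c + 1)"
  defines "c' \<equiv> nat \<lfloor>1 / y\<rfloor>"
  shows "c < c'" "1 - real c' * y \<notin> \<rat>" "0 < 1 - real c' * y" "1 - real c' * y < 1 / (real c' + 1)"
proof -
  have "1 / y \<notin> \<rat>"
    using y(1) Rats_divide[OF Rats_1, of "1 / y"] by auto
  then have "real_of_int \<lfloor>1 / y\<rfloor> \<noteq> 1 / y" by (metis Rats_of_int)
  then have floor: "real_of_int \<lfloor>1 / y\<rfloor> < 1 / y" "1 / y < real_of_int \<lfloor>1 / y\<rfloor> + 1"
    by linarith+
  have "real c + 1 < 1 / y" using y by (simp add: field_simps)
  then have "int c + 1 \<le> \<lfloor>1 / y\<rfloor>" by linarith
  then have c': "real c' = real_of_int \<lfloor>1 / y\<rfloor>" "c < c'" unfolding c'_def by linarith+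
  show "c < c'" by (fact c'(2))
  have "0 < real c'" using c'(2) by simp
  then have lower: "1 < y * (real c' + 1)" and upper: "real c' * y < 1"
    using floor c'(1) y(2) by (simp_all add: field_simps)
  show "0 < 1 - real c' * y" using upper by simp
  have "real c' * 1 < real c' * (y * (real c' + 1))"
    using lower \<open>0 < real c'\<close> by (rule mult_strict_left_mono)
  then show "1 - real c' * y < 1 / (real c' + 1)"
    using \<open>0 < real c'\<close> by (simp add: field_simps)
  show "1 - real c' * y \<notin> \<rat>"
  proof
    assume "1 - real c' * y \<in> \<rat>"
    then have "real c' * y \<in> \<rat>" using Rats_diff[OF Rats_1] by fastforce
    then have "real c' * y / real c' \<in> \<rat>" by (rule Rats_divide[OF _ Rats_of_nat])
    then show False using y(1) \<open>0 < real c'\<close> by simp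
  qed
qed

text \<open>The greedy algorithm: \<open>greedy_sum x n = g\<^sub>1 + \<dots> + g\<^sub>n\<close> and
  \<open>x = branch 0 [g\<^sub>1, \<dots>, g\<^sub>n] (greedy_rem x n)\<close>.\<close>

primrec greedy_rem :: "real \<Rightarrow> nat \<Rightarrow> real" where
  "greedy_rem x 0 = x"
| "greedy_rem x (Suc n) = 1 - real (nat \<lfloor>1 / greedy_rem x n\<rfloor>) * greedy_rem x n"

primrec greedy_sum :: "real \<Rightarrow> nat \<Rightarrow> nat" where
  "greedy_sum x 0 = 0"
| "greedy_sum x (Suc n) = nat \<lfloor>1 / greedy_rem x n\<rfloor>"

definition greedy_digits :: "real \<Rightarrow> nat \<Rightarrow> nat" where
  "greedy_digits x k = greedy_sum x (Suc k) - greedy_sum x k"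

lemma greedy_rem_Suc [simp]: "greedy_rem x (Suc n) = 1 - real (greedy_sum x (Suc n)) * greedy_rem x n"
  by simp

declare greedy_rem.simps(2) [simp del] greedy_sum.simps(2) [simp del]

lemma greedy_rem_bounds:
  assumes x: "x \<in> {0<..<1} - \<rat>"
  shows "greedy_rem x n \<notin> \<rat> \<and> 0 < greedy_rem x n \<and>
    greedy_rem x n < 1 / (real (greedy_sum x n) + 1)"
proof (induction n)
  case (Suc n)
  then show ?case
    using greedy_step(2-4)[of "greedy_rem x n" "greedy_sum x n"] by (simp add: greedy_sum.simps(2))
qed (use x in simp)

lemma greedy_sum_less:
  "x \<in> {0<..<1} - \<rat> \<Longrightarrow> greedy_sum x n < greedy_sum x (Suc n)"
  using greedy_step(1)[of "greedy_rem x n" "greedy_sum x n"] greedy_rem_bounds[of x n]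
  by (simp add: greedy_sum.simps(2))

lemma greedy_digits_pos: "x \<in> {0<..<1} - \<rat> \<Longrightarrow> \<forall>k. 0 < greedy_digits x k"
  using greedy_sum_less by (simp add: greedy_digits_def)

lemma sum_greedy_digits:
  "x \<in> {0<..<1} - \<rat> \<Longrightarrow> (\<Sum>i<n. greedy_digits x i) = greedy_sum x n"
  by (induction n) (simp_all add: greedy_digits_def less_imp_le greedy_sum_less)

lemma greedy_sum_ge: "x \<in> {0<..<1} - \<rat> \<Longrightarrow> n \<le> greedy_sum x n"
proof (induction n)
  case (Suc n)
  then show ?case using greedy_sum_less[of x n] by simp
qed simp

lemma branch_greedy_rem:
  assumes x: "x \<in> {0<..<1} - \<rat>"
  shows "x = branch 0 (map (greedy_digits x) [0..<n]) (greedy_rem x n)"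
proof (induction n)
  case (Suc n)
  let ?p = "map (greedy_digits x) [0..<n]"
  have "sum_list ?p + greedy_digits x n = greedy_sum x (Suc n)"
    using sum_greedy_digits[OF x, of n] greedy_sum_less[OF x, of n]
    by (simp add: sum_list_sum_nth atLeast0LessThan greedy_digits_def)
  moreover have "0 < greedy_sum x (Suc n)" using greedy_sum_less[OF x, of n] by simp
  ultimately have "branch (sum_list ?p) [greedy_digits x n] (greedy_rem x (Suc n)) = greedy_rem x n"
    by (simp add: field_simps)
  then show ?case using Suc by (simp add: branch_append)
qed simp

lemma Obar_greedy_digits:
  assumes x: "x \<in> {0<..<1} - \<rat>"
  shows "Obar 0 (greedy_digits x) = x"
proof -
  let ?g = "greedy_digits x"
  have g: "\<forall>k. 0 < ?g k" by (rule greedy_digits_pos[OF x])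
  have close: "\<bar>Obar 0 ?g - x\<bar> \<le> 1 / (real n + 1)" for n
  proof -
    let ?p = "map ?g [0..<n]" and ?s = "greedy_sum x n"
    let ?t = "Obar ?s (\<lambda>k. ?g (k + n))"
    have "0 \<le> ?t" "?t \<le> 1 / real (?s + ?g n)"
      using Obar_nonneg[of "\<lambda>k. ?g (k + n)" ?s] Obar_le[of "\<lambda>k. ?g (k + n)" ?s] g by simp_all
    moreover have "1 / real (?s + ?g n) \<le> 1 / (real ?s + 1)"
      using g[rule_format, of n] by (intro frac_le) auto
    moreover have "0 < greedy_rem x n" "greedy_rem x n < 1 / (real ?s + 1)"
      using greedy_rem_bounds[OF x, of n] by auto
    ultimately have "\<bar>?t - greedy_rem x n\<bar> \<le> 1 / (real ?s + 1)" by linarith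
    also have "\<dots> \<le> 1 / (real n + 1)"
      using greedy_sum_ge[OF x, of n] by (intro divide_left_mono) auto
    finally have "\<bar>?t - greedy_rem x n\<bar> \<le> 1 / (real n + 1)" .
    moreover have "Obar 0 ?g - x = branch_slope 0 ?p * (?t - greedy_rem x n)"
      using Obar_prefix[OF g, of 0 n] branch_greedy_rem[OF x, of n] sum_greedy_digits[OF x, of n]
      by (metis add_0 branch_diff)
    moreover have "\<bar>branch_slope 0 ?p\<bar> \<le> 1" using g by (intro abs_branch_slope_le_1) simp
    ultimately show ?thesis by (simp add: abs_mult mult_le_one order_trans[OF mult_right_mono])
  qed
  show ?thesis
  proof (rule ccontr)
    assume "Obar 0 ?g \<noteq> x"
    then obtain n where "inverse (real (Suc n)) < \<bar>Obar 0 ?g - x\<bar>"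
      using reals_Archimedean[of "\<bar>Obar 0 ?g - x\<bar>"] by auto
    then show False using close[of n] by (simp add: inverse_eq_divide add.commute)
  qed
qed

section \<open>The shift\<close>

lemma Obar1_shift_0 [simp]: "Obar1_shift 0 = 0"
  by (simp add: Obar1_shift_def)

lemma Obar1_digits_Obar:
  assumes "\<forall>k. 0 < g k" shows "Obar1_digits (Obar 0 g) = g"
  unfolding Obar1_digits_def Obar1_eq_Obar
  by (rule the_equality) (use assms Obar_inj in auto)

lemma Obar1_shift_Obar:
  assumes "\<forall>k. 0 < g k" "Obar 0 g \<notin> \<rat>"
  shows "Obar1_shift (Obar 0 g) = Obar 0 (\<lambda>k. g (Suc k))"
  using assms Obar_in_0_1[OF assms(1)]
  by (simp add: Obar1_shift_def Obar1_digits_Obar Obar1_eq_Obar)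

lemma Obar1_shift_in_unit: "Obar1_shift x \<in> {0..1}"
proof (cases "x \<in> {0<..<1} - \<rat>")
  case True
  then have "\<forall>k. 0 < greedy_digits x k" "Obar 0 (greedy_digits x) = x"
    by (simp_all add: greedy_digits_pos Obar_greedy_digits)
  then show ?thesis
    using True Obar1_shift_Obar Obar_in_0_1[of "\<lambda>k. greedy_digits x (Suc k)"]
    by (metis DiffD2 greaterThanLessThan_iff atLeastAtMost_iff less_imp_le)
qed (auto simp: Obar1_shift_def)

lemma funpow_Obar1_shift_Obar:
  assumes g: "\<forall>k. 0 < g k"
  shows "(Obar1_shift ^^ n) (Obar 0 g) \<in> {Obar 0 (\<lambda>k. g (k + n)), 0}"
proof (induction n)
  case (Suc n)
  let ?y = "Obar 0 (\<lambda>k. g (k + n))"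
  have "Obar1_shift ?y \<in> {Obar 0 (\<lambda>k. g (k + Suc n)), 0}"
    \<comment> \<open>a rational tail is sent to the fixed point \<open>0\<close>\<close>
  proof (cases "?y \<in> \<rat>")
    case False
    then show ?thesis using Obar1_shift_Obar[of "\<lambda>k. g (k + n)"] g by simp
  qed (simp add: Obar1_shift_def)
  then show ?case using Suc by auto
qed simp

section \<open>Cylinders and their Lebesgue measure\<close>

text \<open>By \<open>Obar_prefix\<close>, a point whose expansion (with shift \<open>c\<close>) starts with the digits
  \<open>p\<close> is \<open>branch c p\<close> applied to its tail, which lies in the interval below; the tail is at
  least \<open>1 / (c + sum_list p + K + 1)\<close> exactly when the next digit is at most \<open>K\<close>.\<close>

definition cylinder :: "nat \<Rightarrow> nat list \<Rightarrow> real set" where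
  "cylinder c p = branch c p ` {0<..<1 / (real (c + sum_list p) + 1)}"

definition cylinder_next_le :: "nat \<Rightarrow> nat \<Rightarrow> nat list \<Rightarrow> real set" where
  "cylinder_next_le K c p =
     branch c p ` {1 / (real (c + sum_list p + K) + 1)..<1 / (real (c + sum_list p) + 1)}"

lemma cylinder_next_le_subset: "cylinder_next_le K c p \<subseteq> cylinder c p"
  unfolding cylinder_next_le_def cylinder_def
proof (intro image_mono subsetI)
  fix t assume "t \<in> {1 / (real (c + sum_list p + K) + 1)..<1 / (real (c + sum_list p) + 1)}"
  moreover have "0 < 1 / (real (c + sum_list p + K) + 1)" by simp
  ultimately show "t \<in> {0<..<1 / (real (c + sum_list p) + 1)}"
    by (auto simp only: atLeastLessThan_iff greaterThanLessThan_iff intro: less_le_trans)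
qed

lemma mem_cylinder_Cons:
  "x \<in> cylinder c (m # p) \<longleftrightarrow> (\<exists>z \<in> cylinder (c + m) p. x = (1 - z) / real (c + m))"
  by (auto simp: cylinder_def add.assoc)

lemma one_minus_div_bounds:
  fixes d z :: real
  assumes "1 \<le> d" "0 < z" "z < 1 / (d + 1)"
  shows "1 / (d + 1) < (1 - z) / d" "(1 - z) / d < 1 / d"
  using assms by (simp_all add: field_simps)

lemma cylinder_subset: "\<forall>m\<in>set p. 0 < m \<Longrightarrow> cylinder c p \<subseteq> {0<..<1 / (real c + 1)}"
proof (induction p arbitrary: c)
  case Nil
  then show ?case by (auto simp: cylinder_def)
next
  case (Cons m p)
  show ?case
  proof
    fix x assume "x \<in> cylinder c (m # p)"
    then obtain z where z: "z \<in> cylinder (c + m) p" and x: "x = (1 - z) / real (c + m)"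
      by (auto simp: mem_cylinder_Cons)
    have "z \<in> {0<..<1 / (real (c + m) + 1)}" using Cons.IH[of "c + m"] Cons.prems z by auto
    then have "0 < x" "x < 1 / real (c + m)"
      using one_minus_div_bounds[of "real (c + m)" z] Cons.prems x by (auto intro: less_trans[rotated])
    moreover have "1 / real (c + m) \<le> 1 / (real c + 1)" using Cons.prems by (intro frac_le) auto
    ultimately show "x \<in> {0<..<1 / (real c + 1)}" by simp
  qed
qed

lemma cylinder_Cons_bounds:
  assumes "\<forall>k\<in>set (m # p). 0 < k" "x \<in> cylinder c (m # p)"
  shows "1 / (real (c + m) + 1) < x" "x < 1 / real (c + m)" "1 - real (c + m) * x \<in> cylinder (c + m) p"
proof -
  obtain z where z: "z \<in> cylinder (c + m) p" and x: "x = (1 - z) / real (c + m)"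
    using assms(2) by (auto simp: mem_cylinder_Cons)
  have "z \<in> {0<..<1 / (real (c + m) + 1)}" using cylinder_subset[of p "c + m"] assms(1) z by auto
  then show "1 / (real (c + m) + 1) < x" "x < 1 / real (c + m)"
    using one_minus_div_bounds[of "real (c + m)" z] assms(1) x by auto
  show "1 - real (c + m) * x \<in> cylinder (c + m) p" using z x assms(1) by simp
qed

lemma cylinders_disjoint:
  assumes "\<forall>m\<in>set p. 0 < m" "\<forall>m\<in>set q. 0 < m" "length p = length q"
    and "x \<in> cylinder c p" "x \<in> cylinder c q"
  shows "p = q"
  using assms
proof (induction p arbitrary: c q x)
  case (Cons m p)
  then obtain m' q' where q: "q = m' # q'" by (cases q) auto
  note bounds = cylinder_Cons_bounds[OF Cons.prems(1,4)]
  note bounds' = cylinder_Cons_bounds[OF Cons.prems(2,5)[unfolded q]]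
  have "m = m'"
  proof (rule ccontr)
    assume "m \<noteq> m'"
    then consider "m < m'" | "m' < m" by linarith
    then show False
    proof cases
      case 1
      then have "1 / real (c + m') \<le> 1 / (real (c + m) + 1)" by (intro frac_le) auto
      then show False using bounds(1) bounds'(2) by linarith
    next
      case 2
      then have "1 / real (c + m) \<le> 1 / (real (c + m') + 1)" by (intro frac_le) auto
      then show False using bounds(2) bounds'(1) by linarith
    qed
  qed
  moreover have "p = q'"
    using Cons.IH[where c="c + m" and q=q' and x="1 - real (c + m) * x"]
      bounds(3) bounds'(3) Cons.prems q \<open>m = m'\<close>
    by auto
  ultimately show ?case using q by simp
qed simp

lemma
  assumes "\<forall>m\<in>set p. 0 < m" "I \<in> sets borel"
  shows sets_borel_branch_image: "branch c p ` I \<in> sets borel"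
    and emeasure_branch_image: "emeasure lborel (branch c p ` I) = \<bar>branch_slope c p\<bar> * emeasure lborel I"
proof -
  have "branch c p = (\<lambda>t. branch_offset c p + branch_slope c p * t)"
    by (simp add: branch_def fun_eq_iff)
  then show "branch c p ` I \<in> sets borel"
    "emeasure lborel (branch c p ` I) = \<bar>branch_slope c p\<bar> * emeasure lborel I"
    using sets_borel_affine_image emeasure_lborel_affine_image branch_slope_nonzero[OF assms(1)] assms(2)
    by simp_all
qed

lemma
  assumes "\<forall>m\<in>set p. 0 < m"
  shows cylinder_borel: "cylinder c p \<in> sets borel"
    and emeasure_cylinder:
      "emeasure lborel (cylinder c p) = ennreal (\<bar>branch_slope c p\<bar> / (real (c + sum_list p) + 1))"
  using sets_borel_branch_image[OF assms] emeasure_branch_image[OF assms]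
  by (simp_all add: cylinder_def ennreal_mult'[symmetric])

lemma
  assumes "\<forall>m\<in>set p. 0 < m"
  shows cylinder_next_le_borel: "cylinder_next_le K c p \<in> sets borel"
    and emeasure_cylinder_next_le: "emeasure lborel (cylinder_next_le K c p) =
      ennreal (\<bar>branch_slope c p\<bar> * (1 / (real (c + sum_list p) + 1) - 1 / (real (c + sum_list p + K) + 1)))"
proof -
  have "1 / (real (c + sum_list p + K) + 1) \<le> 1 / (real (c + sum_list p) + 1)"
    by (intro frac_le) auto
  then show "cylinder_next_le K c p \<in> sets borel"
      "emeasure lborel (cylinder_next_le K c p) =
      ennreal (\<bar>branch_slope c p\<bar> * (1 / (real (c + sum_list p) + 1) - 1 / (real (c + sum_list p + K) + 1)))"
    using sets_borel_branch_image[OF assms] emeasure_branch_image[OF assms]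
    by (simp_all add: cylinder_next_le_def ennreal_mult'[symmetric])
qed

lemma emeasure_cylinder_next_le_le:
  assumes p: "\<forall>m\<in>set p. 0 < m"
  shows "emeasure lborel (cylinder_next_le K 0 p)
    \<le> ennreal (real K / (real (length p) + 1)) * emeasure lborel (cylinder 0 p)"
proof -
  let ?s = "real (sum_list p)" and ?\<beta> = "\<bar>branch_slope 0 p\<bar>"
  have "length p \<le> sum_list p" using p by (induction p) (auto simp: Suc_le_eq)
  have "?\<beta> * (1 / (?s + 1) - 1 / (?s + real K + 1)) = ?\<beta> / (?s + 1) * (real K / (?s + real K + 1))"
    by (simp add: field_simps)
  also have "\<dots> \<le> ?\<beta> / (?s + 1) * (real K / (real (length p) + 1))"
    using \<open>length p \<le> sum_list p\<close> by (intro mult_left_mono divide_left_mono) auto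
  also have "\<dots> = real K / (real (length p) + 1) * (?\<beta> / (?s + 1))"
    by (rule mult.commute)
  finally have "ennreal (?\<beta> * (1 / (?s + 1) - 1 / (?s + real K + 1)))
      \<le> ennreal (real K / (real (length p) + 1)) * ennreal (?\<beta> / (?s + 1))"
    by (subst ennreal_mult'[symmetric]) (simp_all add: ennreal_leI)
  then show ?thesis using p by (simp add: emeasure_cylinder emeasure_cylinder_next_le)
qed

definition next_digit_le :: "nat \<Rightarrow> nat \<Rightarrow> real set" where
  "next_digit_le K n = (\<Union>p\<in>{p. length p = n \<and> (\<forall>m\<in>set p. 0 < m)}. cylinder_next_le K 0 p)"

lemma emeasure_next_digit_le: "emeasure lborel (next_digit_le K n) \<le> ennreal (real K / (real n + 1))"
proof -
  let ?P = "{p :: nat list. length p = n \<and> (\<forall>m\<in>set p. 0 < m)}"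
  let ?e = "ennreal (real K / (real n + 1))"
  have countable: "countable ?P" by (rule countableI_type)
  have disjoint: "disjoint_family_on (cylinder 0) ?P"
    unfolding disjoint_family_on_def using cylinders_disjoint by blast
  have "disjoint_family_on (cylinder_next_le K 0) ?P"
    unfolding disjoint_family_on_def
  proof (intro ballI impI)
    fix p q assume "p \<in> ?P" "q \<in> ?P" "p \<noteq> q"
    then have "cylinder 0 p \<inter> cylinder 0 q = {}" using disjoint by (simp add: disjoint_family_on_def)
    then show "cylinder_next_le K 0 p \<inter> cylinder_next_le K 0 q = {}"
      using cylinder_next_le_subset[of K 0 p] cylinder_next_le_subset[of K 0 q] by blast
  qed
  then have "emeasure lborel (next_digit_le K n)
      = (\<integral>\<^sup>+p. emeasure lborel (cylinder_next_le K 0 p) \<partial>count_space ?P)"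
    unfolding next_digit_le_def using cylinder_next_le_borel countable
    by (intro emeasure_UN_countable) auto
  also have "\<dots> \<le> (\<integral>\<^sup>+p. ?e * emeasure lborel (cylinder 0 p) \<partial>count_space ?P)"
  proof (rule nn_integral_mono)
    fix p assume "p \<in> space (count_space ?P)"
    then show "emeasure lborel (cylinder_next_le K 0 p) \<le> ?e * emeasure lborel (cylinder 0 p)"
      using emeasure_cylinder_next_le_le[of p K] by simp
  qed
  also have "\<dots> = ?e * (\<integral>\<^sup>+p. emeasure lborel (cylinder 0 p) \<partial>count_space ?P)"
    by (rule nn_integral_cmult) simp
  also have "(\<integral>\<^sup>+p. emeasure lborel (cylinder 0 p) \<partial>count_space ?P)
      = emeasure lborel (\<Union>p\<in>?P. cylinder 0 p)"
    using cylinder_borel countable disjoint by (intro emeasure_UN_countable[symmetric]) auto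
  also have "?e * \<dots> \<le> ?e * emeasure lborel {0<..<1::real}"
    using cylinder_subset[of _ 0] by (intro mult_left_mono emeasure_mono) auto
  finally show ?thesis by simp
qed

lemma mem_next_digit_le_if_funpow_ge:
  assumes a: "0 < a" "1 / a \<le> real K" and n: "0 < n"
    and shift: "a \<le> (Obar1_shift ^^ n) x"
  shows "x \<in> next_digit_le K n"
proof -
  have "x \<in> {0<..<1} - \<rat>"
  proof (rule ccontr)
    assume "x \<notin> {0<..<1} - \<rat>"
    then have "Obar1_shift x = 0" by (auto simp: Obar1_shift_def)
    moreover have "(Obar1_shift ^^ m) 0 = 0" for m by (induction m) simp_all
    ultimately have "(Obar1_shift ^^ n) x = 0" using n by (metis funpow_Suc_right gr0_implies_Suc o_apply)
    then show False using a shift by simp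
  qed
  then have g: "\<forall>k. 0 < greedy_digits x k" and x_eq: "Obar 0 (greedy_digits x) = x"
    by (simp_all add: greedy_digits_pos Obar_greedy_digits)
  define g where "g = greedy_digits x"
  define p where "p = map g [0..<n]"
  define t where "t = Obar (sum_list p) (\<lambda>k. g (k + n))"
  have tail: "\<forall>k. 0 < g (k + n)" using g by (simp add: g_def)
  have "(Obar1_shift ^^ n) x = Obar 0 (\<lambda>k. g (k + n))"
    using funpow_Obar1_shift_Obar[OF g, of n] shift a by (auto simp: g_def x_eq)
  then have "a < 1 / real (g n)" using Obar_less[OF tail, of 0] shift by simp
  then have "real (g n) < 1 / a" using a tail[rule_format, of 0] by (simp add: field_simps)
  then have "g n \<le> K" using a by linarith
  have "sum_list p = (\<Sum>i<n. g i)"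
    by (simp add: p_def interv_sum_list_conv_sum_set_nat atLeast0LessThan)
  then have "x = branch 0 p t" using Obar_prefix[OF g, of 0 n] x_eq by (simp add: p_def t_def g_def)
  moreover have "1 / (real (sum_list p + K) + 1) \<le> t"
  proof -
    have "1 / (real (sum_list p + K) + 1) \<le> 1 / real (sum_list p + g n + 1)"
      using \<open>g n \<le> K\<close> by (intro frac_le) auto
    then show ?thesis using Obar_greater[OF tail, of "sum_list p"] by (simp add: t_def)
  qed
  moreover have "t < 1 / (real (sum_list p) + 1)"
  proof -
    have "1 / real (sum_list p + g n) \<le> 1 / (real (sum_list p) + 1)"
      using tail[rule_format, of 0] by (intro frac_le) auto
    then show ?thesis using Obar_less[OF tail, of "sum_list p"] by (simp add: t_def)
  qed
  ultimately have "x \<in> cylinder_next_le K 0 p" by (simp add: cylinder_next_le_def)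
  moreover have "length p = n" "\<forall>m\<in>set p. 0 < m" using g by (auto simp: p_def g_def)
  ultimately show ?thesis unfolding next_digit_le_def by blast
qed

lemma next_digit_le_borel: "next_digit_le K n \<in> sets borel"
  unfolding next_digit_le_def
  by (rule sets.countable_UN''[OF countableI_type]) (simp add: cylinder_next_le_borel)

lemma funpow_Obar1_shift_preimage_subset:
  assumes "0 < a" "0 < n"
  shows "(Obar1_shift ^^ n) -` {a..1} \<subseteq> next_digit_le (nat \<lceil>1 / a\<rceil>) n"
proof
  fix x assume "x \<in> (Obar1_shift ^^ n) -` {a..1}"
  moreover have "1 / a \<le> real (nat \<lceil>1 / a\<rceil>)" by linarith
  ultimately show "x \<in> next_digit_le (nat \<lceil>1 / a\<rceil>) n"
    by (intro mem_next_digit_le_if_funpow_ge[OF assms(1) _ assms(2)]) simp_all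
qed

section \<open>No absolutely continuous invariant measure\<close>

lemma emeasure_Icc_eq_0_if_Obar1_shift_invariant:
  fixes \<nu> :: "real measure"
  assumes sets: "sets \<nu> = sets (restrict_space borel {0..1})" and space: "space \<nu> = {0..1}"
    and fin: "finite_measure \<nu>" and inv: "T_invariant \<nu> Obar1_shift"
    and ac: "absolutely_continuous (restrict_space lborel {0..1}) \<nu>" and a: "0 < a"
  shows "emeasure \<nu> {a..1} = 0"
proof -
  let ?M = "restrict_space lborel {0..1::real}"
  define K where "K = nat \<lceil>1 / a\<rceil>"
  define A where "A k = (Obar1_shift ^^ 2 ^ k) -` {a..1} \<inter> space \<nu>" for k
  have sets_M: "sets \<nu> = sets ?M" using sets by (simp add: sets_restrict_space_cong[OF sets_lborel])
  have "{a..1} \<in> sets \<nu>" using sets a by (simp add: sets_restrict_space_iff)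
  moreover have "Obar1_shift \<in> space \<nu> \<rightarrow> space \<nu>" using Obar1_shift_in_unit space by auto
  ultimately have A: "A k \<in> sets \<nu>" "emeasure \<nu> (A k) = emeasure \<nu> {a..1}" for k
    using T_invariant_funpow[OF inv] by (simp_all add: A_def)
  have "emeasure ?M (A k) \<le> ennreal (real K * (1 / 2) ^ k)" for k
  proof -
    let ?U = "next_digit_le K (2 ^ k)"
    have "A k \<subseteq> ?U"
      using funpow_Obar1_shift_preimage_subset[OF a, of "2 ^ k"] by (auto simp: A_def K_def)
    then have "emeasure ?M (A k) \<le> emeasure lborel ?U"
      using A(1)[of k] sets_M space by (subst emeasure_restrict_space)
        (auto simp: sets_restrict_space_iff intro!: emeasure_mono next_digit_le_borel)
    also have "\<dots> \<le> ennreal (real K / (2 ^ k + 1))"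
      using emeasure_next_digit_le[of K "2 ^ k"] by simp
    also have "\<dots> \<le> ennreal (real K / 2 ^ k)"
      by (intro ennreal_leI divide_left_mono mult_pos_pos add_pos_pos) auto
    also have "\<dots> = ennreal (real K * (1 / 2) ^ k)"
      by (simp add: power_one_over)
    finally show ?thesis .
  qed
  then have "(\<Sum>k. emeasure ?M (A k)) \<le> (\<Sum>k. ennreal (real K * (1 / 2) ^ k))"
    by (intro suminf_le) auto
  also have "\<dots> = ennreal (real K * 2)"
    using geometric_sums[of "1 / 2 :: real"] by (intro suminf_ennreal_eq sums_mult) auto
  finally have "(\<Sum>k. emeasure ?M (A k)) \<noteq> \<infinity>" by (auto simp: top_unique)
  then show ?thesis
    using absolutely_continuous_lower_bound_eq_0[OF ac sets_M fin, of A "emeasure \<nu> {a..1}"] A sets_M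
    by simp
qed

lemma atLeastAtMost_0_1_eq: "{0..1::real} = {0} \<union> (\<Union>n. {1 / real (Suc n)..1})"
proof (intro equalityI subsetI)
  fix x :: real assume x: "x \<in> {0..1}"
  show "x \<in> {0} \<union> (\<Union>n. {1 / real (Suc n)..1})"
  proof (cases "x = 0")
    case False
    with x have "0 < x" by simp
    then obtain n where "inverse (real (Suc n)) < x" by (rule reals_Archimedean[elim_format]) blast
    with x have "x \<in> {1 / real (Suc n)..1}" by (simp add: inverse_eq_divide)
    then show ?thesis by blast
  qed simp
next
  fix x :: real assume "x \<in> {0} \<union> (\<Union>n. {1 / real (Suc n)..1})"
  then consider "x = 0" | n where "1 / real (Suc n) \<le> x" "x \<le> 1" by auto
  then show "x \<in> {0..1}"
  proof cases
    case 2
    have "0 < 1 / real (Suc n)" by simp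
    then have "0 \<le> x" using 2(1) by linarith
    then show ?thesis using 2(2) by simp
  qed simp
qed

lemma not_absolutely_continuous_if_Obar1_shift_invariant:
  fixes \<nu> :: "real measure"
  assumes sets: "sets \<nu> = sets (restrict_space borel {0..1})" and space: "space \<nu> = {0..1}"
    and prob: "prob_space \<nu>" and inv: "T_invariant \<nu> Obar1_shift"
  shows "\<not> absolutely_continuous (restrict_space lborel {0..1}) \<nu>"
proof
  assume ac: "absolutely_continuous (restrict_space lborel {0..1}) \<nu>"
  have fin: "finite_measure \<nu>" using prob by (simp add: prob_space_def)
  have "{0} \<in> null_sets (restrict_space lborel {0..1::real})"
    by (simp add: null_sets_def sets_restrict_space_iff emeasure_restrict_space)
  then have "{0} \<in> null_sets \<nu>" using ac unfolding absolutely_continuous_def by blast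
  moreover have "(\<Union>n. {1 / real (Suc n)..1}) \<in> null_sets \<nu>"
  proof (rule null_sets_UN)
    fix n
    show "{1 / real (Suc n)..1} \<in> null_sets \<nu>"
      using emeasure_Icc_eq_0_if_Obar1_shift_invariant[OF sets space fin inv ac, of "1 / real (Suc n)"] sets
      by (simp add: null_sets_def sets_restrict_space_iff)
  qed
  ultimately have "{0..1} \<in> null_sets \<nu>"
    unfolding atLeastAtMost_0_1_eq by (rule null_sets.Un)
  then have "emeasure \<nu> (space \<nu>) = 0" unfolding space by (rule null_setsD1)
  then show False using prob_space.emeasure_space_1[OF prob] by simp
qed

theorem theorem4:
  shows "\<not> (\<exists>\<nu> :: real measure.
            sets \<nu> = sets (restrict_space borel {0..1::real}) \<and>
            space \<nu> = {0..1} \<and>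
            prob_space \<nu> \<and>
            T_invariant \<nu> Obar1_shift \<and>
            T_ergodic \<nu> Obar1_shift \<and>
            absolutely_continuous (restrict_space lborel {0..1}) \<nu>)"
  using not_absolutely_continuous_if_Obar1_shift_invariant by blast

end
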